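(* Let $A$ be a real $n\times n$ matrix, $\alpha>0$, and $F_{A,\alpha}(u)=|u|^\alpha Au$ for $u\in\mathbb R^n$. If $$\frac{\mathrm{Tr}(A)}{|A|}\ge\sqrt{n-\frac1{(1+\alpha)^2}},$$ then $F_{A,\alpha}$ is monotone. If the inequality is strict, then $F_{A,\alpha}$ is $(\alpha+2)$-monotone.
   Context: $|u|$ is the Euclidean norm of $u$; for a matrix $A=(a_{ij})$, $|A|=(\sum_{i,j}a_{ij}^2)^{1/2}$ and $\mathrm{Tr}$ is the trace. A map $F:\mathbb R^n\to\mathbb R^n$ is monotone if $(F(u)-F(v))\cdot(u-v)\ge0$ for all $u,v$; for $\beta>0$ it is $\beta$-monotone if there is $C>0$ with $(F(u)-F(v))\cdot(u-v)\ge C|u-v|^\beta$ for all $u,v$. *)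

theory Defs
  imports "HOL-Analysis.Analysis"
begin

definition frob_norm :: "real^'n^'n \<Rightarrow> real" where
  "frob_norm A = sqrt (\<Sum>i\<in>UNIV. \<Sum>j\<in>UNIV. (A $ i $ j)^2)"

definition mat_trace :: "real^'n^'n \<Rightarrow> real" where
  "mat_trace A = (\<Sum>i\<in>UNIV. A $ i $ i)"

definition monotone_map :: "(real^'n \<Rightarrow> real^'n) \<Rightarrow> bool" where
  "monotone_map F \<longleftrightarrow> (\<forall>u v. (F u - F v) \<bullet> (u - v) \<ge> 0)"

definition beta_monotone :: "real \<Rightarrow> (real^'n \<Rightarrow> real^'n) \<Rightarrow> bool" where
  "beta_monotone \<beta> F \<longleftrightarrow> (\<exists>C>0. \<forall>u v. (F u - F v) \<bullet> (u - v) \<ge> C * norm (u - v) powr \<beta>)"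

definition F_map :: "real^'n^'n \<Rightarrow> real \<Rightarrow> real^'n \<Rightarrow> real^'n" where
  "F_map A \<alpha> u = (norm u powr \<alpha>) *\<^sub>R (A *v u)"

end

theory Submission
  imports Defs
begin

text \<open>Differentiating \<open>F_map A \<alpha>\<close> along the segment from \<open>v\<close> to \<open>u\<close> reduces monotonicity to
  the pointwise inequality \<open>h \<bullet> A y \<ge> 0\<close> for \<open>y = |w|\<^sup>2 h + \<alpha> (w \<bullet> h) w\<close>. Elementary algebra puts
  \<open>y\<close> in the cone \<open>cos \<angle>(h, y) \<ge> 1 / (1 + \<alpha>)\<close>. Writing \<open>h \<bullet> A y = \<langle>A, h \<otimes> y\<rangle>\<close> and splitting both
  \<open>A\<close> and \<open>h \<otimes> y\<close> into a multiple of the identity plus a traceless part, Cauchy-Schwarz for the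
  traceless parts gives \<open>h \<bullet> A y \<ge> 0\<close> on that cone as soon as \<open>Tr A / |A| \<ge> \<surd>(n - 1/(1+\<alpha>)\<^sup>2)\<close>.
  Under the strict inequality \<open>A - \<epsilon> I\<close> still satisfies the non-strict one for some \<open>\<epsilon> > 0\<close>, and
  \<open>F_map A \<alpha> u = F_map (A - \<epsilon> I) \<alpha> u + \<epsilon> |u|\<^sup>\<alpha> u\<close>, where the last map is \<open>(\<alpha> + 2)\<close>-monotone.\<close>

definition outer_prod :: "real^'n \<Rightarrow> real^'n \<Rightarrow> real^'n^'n" where
  "outer_prod x y = (\<chi> i j. x$i * y$j)"

lemma inner_outer_prod: "(A::real^'n^'n) \<bullet> outer_prod x y = x \<bullet> (A *v y)"
  by (simp add: outer_prod_def inner_vec_def matrix_vector_mult_def sum_distrib_left mult_ac)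

lemma outer_prod_inner_mat1: "outer_prod x y \<bullet> mat 1 = x \<bullet> (y::real^'n)"
  by (simp add: mat_def inner_vec_def outer_prod_def if_distrib cong: if_cong)

lemma outer_prod_inner_self: "outer_prod x y \<bullet> outer_prod x y = (norm x)\<^sup>2 * (norm (y::real^'n))\<^sup>2"
  by (simp add: inner_vec_def outer_prod_def sum_product mult_ac power2_norm_eq_inner)

lemma inner_mat1_eq_mat_trace: "(A::real^'n^'n) \<bullet> mat 1 = mat_trace A"
  by (simp add: mat_def inner_vec_def mat_trace_def if_distrib cong: if_cong)

lemma mat1_inner_mat1: "mat 1 \<bullet> (mat 1 :: real^'n^'n) = real CARD('n)"
  by (simp add: mat_def inner_vec_def if_distrib cong: if_cong)

lemma frob_norm_eq_norm: "frob_norm (A::real^'n^'n) = norm A"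
  unfolding frob_norm_def norm_eq_sqrt_inner by (simp add: inner_vec_def power2_eq_square)

lemma mat_trace_diff_scaleR_mat1:
  "mat_trace (A - e *\<^sub>R mat 1 :: real^'n^'n) = mat_trace A - e * real CARD('n)"
  by (simp flip: inner_mat1_eq_mat_trace add: inner_diff_left mat1_inner_mat1)

lemma Cauchy_Schwarz_orthogonal_part:
  fixes a b e :: "'a::real_inner"
  shows "(a \<bullet> b - (a \<bullet> e) * (b \<bullet> e) / (e \<bullet> e))\<^sup>2
           \<le> (a \<bullet> a - (a \<bullet> e)\<^sup>2 / (e \<bullet> e)) * (b \<bullet> b - (b \<bullet> e)\<^sup>2 / (e \<bullet> e))"
    and "0 \<le> a \<bullet> a - (a \<bullet> e)\<^sup>2 / (e \<bullet> e)"
proof -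
  define proj where "proj x = x - (x \<bullet> e / (e \<bullet> e)) *\<^sub>R e" for x
  have inner_proj: "proj x \<bullet> proj y = x \<bullet> y - (x \<bullet> e) * (y \<bullet> e) / (e \<bullet> e)" for x y
    by (cases "e = 0") (auto simp: proj_def inner_diff_left inner_diff_right inner_commute field_simps)
  show "(a \<bullet> b - (a \<bullet> e) * (b \<bullet> e) / (e \<bullet> e))\<^sup>2
           \<le> (a \<bullet> a - (a \<bullet> e)\<^sup>2 / (e \<bullet> e)) * (b \<bullet> b - (b \<bullet> e)\<^sup>2 / (e \<bullet> e))"
    using Cauchy_Schwarz_ineq[of "proj a" "proj b"] by (simp add: inner_proj power2_eq_square)
  show "0 \<le> a \<bullet> a - (a \<bullet> e)\<^sup>2 / (e \<bullet> e)"
    using inner_proj[of a a] inner_ge_zero[of "proj a"] by (simp add: power2_eq_square)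
qed

text \<open>The squared form of \<open>Tr A / |A| \<ge> \<surd>(n - c)\<close>.\<close>
definition trace_dominant :: "real \<Rightarrow> real^'n^'n \<Rightarrow> bool" where
  "trace_dominant c A \<longleftrightarrow> 0 \<le> mat_trace A \<and> (real CARD('n) - c) * (norm A)\<^sup>2 \<le> (mat_trace A)\<^sup>2"

lemma trace_dominant_inner_nonneg:
  fixes A :: "real^'n^'n" and h y :: "real^'n"
  assumes c: "0 < c" "c < real CARD('n)" and A: "trace_dominant c A"
    and y: "0 \<le> h \<bullet> y" "c * ((norm h)\<^sup>2 * (norm y)\<^sup>2) \<le> (h \<bullet> y)\<^sup>2"
  shows "0 \<le> h \<bullet> (A *v y)"
proof -
  define n T p X where "n = real CARD('n)" and "T = mat_trace A" and "p = h \<bullet> y"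
    and "X = (norm h)\<^sup>2 * (norm y)\<^sup>2"
  define D Y where "D = (norm A)\<^sup>2 - T\<^sup>2 / n" and "Y = X - p\<^sup>2 / n"
  have n: "1 \<le> n" by (simp add: n_def)
  have T: "0 \<le> T" "(n - c) * (norm A)\<^sup>2 \<le> T\<^sup>2"
    using A by (simp_all add: trace_dominant_def T_def n_def)
  txt \<open>Cauchy-Schwarz for the traceless parts of \<open>A\<close> and \<open>outer_prod h y\<close>:\<close>
  have CS: "(h \<bullet> (A *v y) - T * p / n)\<^sup>2 \<le> D * Y"
    using Cauchy_Schwarz_orthogonal_part(1)[of A "outer_prod h y" "mat 1",
        unfolded outer_prod_inner_self outer_prod_inner_mat1 mat1_inner_mat1,
        unfolded inner_outer_prod inner_mat1_eq_mat_trace]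
    by (simp add: power2_norm_eq_inner D_def Y_def T_def p_def X_def n_def)
  have D: "0 \<le> D"
    using Cauchy_Schwarz_orthogonal_part(2)[of A "mat 1", unfolded mat1_inner_mat1]
    by (simp add: inner_mat1_eq_mat_trace power2_norm_eq_inner D_def T_def n_def)
  have "p\<^sup>2 \<le> X"
    using Cauchy_Schwarz_ineq[of h y] by (simp add: p_def X_def power2_norm_eq_inner)
  moreover have "p\<^sup>2 / n \<le> p\<^sup>2"
    using n by (simp add: divide_le_eq mult_le_cancel_left1)
  ultimately have Y: "0 \<le> Y" by (simp add: Y_def)
  have "(n - c) * D = (n - c) * (norm A)\<^sup>2 - (n - c) * T\<^sup>2 / n"
    by (simp add: D_def right_diff_distrib)
  also have "\<dots> \<le> T\<^sup>2 - (n - c) * T\<^sup>2 / n" using T(2) by simp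
  also have "\<dots> = c * T\<^sup>2 / n" using n by (simp add: field_simps)
  finally have DT: "(n - c) * D \<le> c * T\<^sup>2 / n" .
  have "c * Y = c * X - c * p\<^sup>2 / n" by (simp add: Y_def right_diff_distrib)
  also have "\<dots> \<le> p\<^sup>2 - c * p\<^sup>2 / n" using y(2) by (simp add: X_def p_def)
  also have "\<dots> = (n - c) * p\<^sup>2 / n" using n by (simp add: field_simps)
  finally have YP: "c * Y \<le> (n - c) * p\<^sup>2 / n" .
  have "((n - c) * c) * (D * Y) = ((n - c) * D) * (c * Y)" by (simp add: ac_simps)
  also have "\<dots> \<le> (c * T\<^sup>2 / n) * ((n - c) * p\<^sup>2 / n)"
    using DT YP D Y c n by (intro mult_mono) simp_all
  also have "\<dots> = ((n - c) * c) * (T * p / n)\<^sup>2" by (simp add: power_mult_distrib power_divide power2_eq_square)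
  finally have "D * Y \<le> (T * p / n)\<^sup>2"
    using c by (simp add: mult_le_cancel_left_pos n_def)
  with CS have "\<bar>h \<bullet> (A *v y) - T * p / n\<bar> \<le> \<bar>T * p / n\<bar>"
    unfolding abs_le_square_iff by linarith
  moreover have "0 \<le> T * p / n" using T y n by (simp add: p_def)
  ultimately show ?thesis by linarith
qed

text \<open>Up to the factor \<open>|w| powr (\<alpha> - 2)\<close>, \<open>y\<close> is the derivative of \<open>u \<mapsto> |u| powr \<alpha> *\<^sub>R u\<close>
  at \<open>w\<close> in direction \<open>h\<close>.\<close>
lemma derivative_direction_cone:
  fixes w h :: "'a::real_inner" and \<alpha> :: real
  assumes "0 \<le> \<alpha>"
  defines "y \<equiv> (norm w)\<^sup>2 *\<^sub>R h + (\<alpha> * (w \<bullet> h)) *\<^sub>R w"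
  shows "0 \<le> h \<bullet> y" and "(norm h)\<^sup>2 * (norm y)\<^sup>2 \<le> (1 + \<alpha>)\<^sup>2 * (h \<bullet> y)\<^sup>2"
proof -
  define W H d where "W = w \<bullet> w" and "H = h \<bullet> h" and "d = (w \<bullet> h)\<^sup>2"
  have nonneg: "0 \<le> W" "0 \<le> H" "0 \<le> d" by (simp_all add: W_def H_def d_def)
  have y: "y = W *\<^sub>R h + (\<alpha> * (w \<bullet> h)) *\<^sub>R w"
    by (simp add: y_def W_def power2_norm_eq_inner)
  have hy: "h \<bullet> y = W * H + \<alpha> * d"
    by (simp add: y H_def d_def inner_add_right inner_commute power2_eq_square)
  have yy: "(norm y)\<^sup>2 = W * W * H + (2 * \<alpha> + \<alpha>\<^sup>2) * W * d"
    unfolding power2_norm_eq_inner y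
    by (simp add: W_def H_def d_def inner_add_left inner_add_right inner_commute power2_eq_square
        algebra_simps)
  have hh: "(norm h)\<^sup>2 = H" by (simp add: H_def power2_norm_eq_inner)
  show "0 \<le> h \<bullet> y" using hy nonneg assms by simp
  have "(1 + \<alpha>)\<^sup>2 * (h \<bullet> y)\<^sup>2 - (norm h)\<^sup>2 * (norm y)\<^sup>2
      = (2 * \<alpha> + \<alpha>\<^sup>2) * (W * H)\<^sup>2 + (3 * \<alpha>\<^sup>2 + 2 * \<alpha>^3) * (W * H) * d + (1 + \<alpha>)\<^sup>2 * \<alpha>\<^sup>2 * d\<^sup>2"
    unfolding hy yy hh by (simp add: algebra_simps power2_eq_square power3_eq_cube)
  also have "\<dots> \<ge> 0" using assms nonneg by simp
  finally show "(norm h)\<^sup>2 * (norm y)\<^sup>2 \<le> (1 + \<alpha>)\<^sup>2 * (h \<bullet> y)\<^sup>2" by simp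
qed

lemma inverse_square_bounds:
  fixes \<alpha> :: real
  assumes "0 < \<alpha>"
  shows "0 < 1 / (1 + \<alpha>)\<^sup>2" and "1 / (1 + \<alpha>)\<^sup>2 < real CARD('n::finite)"
proof -
  have "1 / (1 + \<alpha>)\<^sup>2 < 1" using assms by (simp add: one_less_power)
  moreover have "1 \<le> real CARD('n)" by simp
  ultimately show "1 / (1 + \<alpha>)\<^sup>2 < real CARD('n)" by linarith
  show "0 < 1 / (1 + \<alpha>)\<^sup>2" using assms by simp
qed

lemma trace_dominant_derivative_form_nonneg:
  fixes A :: "real^'n^'n" and w h :: "real^'n"
  assumes "0 < \<alpha>" and "trace_dominant (1 / (1 + \<alpha>)\<^sup>2) A"
  shows "0 \<le> (norm w)\<^sup>2 * (h \<bullet> (A *v h)) + \<alpha> * (w \<bullet> h) * (h \<bullet> (A *v w))"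
proof -
  define y where "y = (norm w)\<^sup>2 *\<^sub>R h + (\<alpha> * (w \<bullet> h)) *\<^sub>R w"
  have "0 \<le> h \<bullet> (A *v y)"
  proof (rule trace_dominant_inner_nonneg[OF inverse_square_bounds[OF assms(1)] assms(2)])
    show "0 \<le> h \<bullet> y" using derivative_direction_cone(1)[where w=w and h=h and \<alpha>=\<alpha>] assms(1) by (simp add: y_def)
    show "1 / (1 + \<alpha>)\<^sup>2 * ((norm h)\<^sup>2 * (norm y)\<^sup>2) \<le> (h \<bullet> y)\<^sup>2"
      using derivative_direction_cone(2)[where w=w and h=h and \<alpha>=\<alpha>] assms(1) by (simp add: y_def field_simps)
  qed
  thus ?thesis
    by (simp add: y_def matrix_vector_right_distrib matrix_vector_mult_scaleR inner_add_right)
qed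

lemma DERIV_norm_along_line:
  fixes v h :: "'a::real_inner"
  assumes "v + s *\<^sub>R h \<noteq> 0"
  shows "((\<lambda>t. norm (v + t *\<^sub>R h)) has_real_derivative ((v + s *\<^sub>R h) \<bullet> h) / norm (v + s *\<^sub>R h)) (at s)"
proof -
  have "((\<lambda>t. v + t *\<^sub>R h) has_derivative (\<lambda>t. t *\<^sub>R h)) (at s)"
    by (auto intro!: derivative_eq_intros)
  from has_derivative_compose[OF this has_derivative_norm[OF assms]] show ?thesis
    unfolding has_field_derivative_def
    by (rule has_derivative_eq_rhs) (auto simp: sgn_div_norm inner_commute fun_eq_iff divide_inverse mult_ac)
qed

lemma F_map_along_line_inner:
  "F_map A \<alpha> (v + t *\<^sub>R h) \<bullet> h = norm (v + t *\<^sub>R h) powr \<alpha> * (h \<bullet> (A *v v) + t * (h \<bullet> (A *v h)))"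
  by (simp add: F_map_def matrix_vector_right_distrib matrix_vector_mult_scaleR inner_add_right inner_commute)

lemma DERIV_F_map_along_line:
  fixes A :: "real^'n^'n" and v h :: "real^'n" and \<alpha> s :: real
  defines "w \<equiv> v + s *\<^sub>R h"
  assumes "w \<noteq> 0"
  shows "((\<lambda>t. F_map A \<alpha> (v + t *\<^sub>R h) \<bullet> h) has_real_derivative
           norm w powr (\<alpha> - 2) * ((norm w)\<^sup>2 * (h \<bullet> (A *v h)) + \<alpha> * (w \<bullet> h) * (h \<bullet> (A *v w)))) (at s)"
proof -
  define r where "r = norm w"
  have r: "0 < r" using assms(2) by (simp add: r_def)
  have d_powr: "((\<lambda>t. norm (v + t *\<^sub>R h) powr \<alpha>) has_real_derivative \<alpha> * r powr (\<alpha> - 1) * ((w \<bullet> h) / r)) (at s)"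
    using DERIV_fun_powr[OF DERIV_norm_along_line] assms r by (simp add: w_def r_def)
  have d_lin: "((\<lambda>t. h \<bullet> (A *v v) + t * (h \<bullet> (A *v h))) has_real_derivative h \<bullet> (A *v h)) (at s)"
    by (auto intro!: derivative_eq_intros)
  have "((\<lambda>t. F_map A \<alpha> (v + t *\<^sub>R h) \<bullet> h) has_real_derivative
      \<alpha> * r powr (\<alpha> - 1) * ((w \<bullet> h) / r) * (h \<bullet> (A *v w)) + r powr \<alpha> * (h \<bullet> (A *v h))) (at s)"
    unfolding F_map_along_line_inner
    by (rule DERIV_cong[OF DERIV_mult[OF d_powr d_lin]])
      (simp add: w_def r_def matrix_vector_right_distrib matrix_vector_mult_scaleR inner_add_right)
  moreover have "r powr (\<alpha> - 1) = r powr (\<alpha> - 2) * r"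
    using powr_add[of r "\<alpha> - 2" 1] r by simp
  moreover have "r powr \<alpha> = r powr (\<alpha> - 2) * r\<^sup>2"
    using r by (simp flip: powr_add powr_numeral)
  ultimately show ?thesis using r by (simp add: r_def algebra_simps)
qed

lemma DERIV_nonneg_imp_increasing_finite:
  fixes f :: "real \<Rightarrow> real"
  assumes "finite S" and "a \<le> b"
    and "\<And>x. x \<in> {a<..<b} - S \<Longrightarrow> \<exists>y. DERIV f x :> y \<and> 0 \<le> y"
    and "continuous_on {a..b} f"
  shows "f a \<le> f b"
  using assms
proof (induction S arbitrary: a b)
  case empty
  then show ?case by (rule DERIV_nonneg_imp_increasing_open) auto
next
  case (insert x S)
  note deriv = insert.prems(2) and cont = insert.prems(3)
  show ?case
  proof (cases "a < x \<and> x < b")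
    case True
    have "f a \<le> f x"
    proof (rule insert.IH)
      show "continuous_on {a..x} f" using cont by (rule continuous_on_subset) (use True in auto)
      show "\<exists>y. DERIV f t :> y \<and> 0 \<le> y" if "t \<in> {a<..<x} - S" for t
        using deriv[of t] that True by simp
    qed (use True in simp)
    also have "f x \<le> f b"
    proof (rule insert.IH)
      show "continuous_on {x..b} f" using cont by (rule continuous_on_subset) (use True in auto)
      show "\<exists>y. DERIV f t :> y \<and> 0 \<le> y" if "t \<in> {x<..<b} - S" for t
        using deriv[of t] that True by simp
    qed (use True in simp)
    finally show ?thesis .
  next
    case False
    show ?thesis
    proof (rule insert.IH[OF insert.prems(1) _ cont])
      show "\<exists>y. DERIV f t :> y \<and> 0 \<le> y" if "t \<in> {a<..<b} - S" for t
        using deriv[of t] that False by auto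
    qed
  qed
qed

lemma finite_line_zeros:
  fixes v h :: "'a::real_vector"
  assumes "h \<noteq> 0"
  shows "finite {t. v + t *\<^sub>R h = 0}"
proof -
  have "inj (\<lambda>t. v + t *\<^sub>R h)" using assms by (auto simp: inj_def)
  from finite_vimageI[OF finite.insertI[OF finite.emptyI] this] show ?thesis
    by (simp add: vimage_def)
qed

lemma F_map_monotone_if_derivative_form_nonneg:
  fixes A :: "real^'n^'n"
  assumes "0 < \<alpha>"
    and form_nonneg: "\<And>w h. 0 \<le> (norm w)\<^sup>2 * (h \<bullet> (A *v h)) + \<alpha> * (w \<bullet> h) * (h \<bullet> (A *v w))"
  shows "monotone_map (F_map A \<alpha>)"
  unfolding monotone_map_def
proof (intro allI)
  fix u v :: "real^'n"
  define h where "h = u - v"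
  define \<phi> where "\<phi> = (\<lambda>t. F_map A \<alpha> (v + t *\<^sub>R h) \<bullet> h)"
  show "0 \<le> (F_map A \<alpha> u - F_map A \<alpha> v) \<bullet> (u - v)"
  proof (cases "h = 0")
    case True
    then show ?thesis by (simp add: h_def)
  next
    case False
    txt \<open>The segment meets the origin, where \<open>F_map A \<alpha>\<close> may fail to be differentiable, at most once.\<close>
    have "\<phi> 0 \<le> \<phi> 1"
    proof (rule DERIV_nonneg_imp_increasing_finite[where f=\<phi> and S="{t. v + t *\<^sub>R h = 0}"])
      show "finite {t. v + t *\<^sub>R h = 0}" using False by (rule finite_line_zeros)
      have "continuous_on {0..1} (\<lambda>t. norm (v + t *\<^sub>R h) powr \<alpha>)"
        using assms(1) by (intro continuous_on_powr' continuous_intros) auto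
      moreover have "continuous_on {0..1} (\<lambda>t. h \<bullet> (A *v v) + t * (h \<bullet> (A *v h)))"
        by (intro continuous_intros)
      ultimately show "continuous_on {0..1} \<phi>"
        unfolding \<phi>_def F_map_along_line_inner by (rule continuous_on_mult)
    next
      fix t assume "t \<in> {0<..<1} - {t. v + t *\<^sub>R h = 0}"
      hence "v + t *\<^sub>R h \<noteq> 0" by simp
      from DERIV_F_map_along_line[OF this, of A \<alpha>]
      have "DERIV \<phi> t :> norm (v + t *\<^sub>R h) powr (\<alpha> - 2) * ((norm (v + t *\<^sub>R h))\<^sup>2 * (h \<bullet> (A *v h))
          + \<alpha> * ((v + t *\<^sub>R h) \<bullet> h) * (h \<bullet> (A *v (v + t *\<^sub>R h))))"
        by (simp add: \<phi>_def)
      moreover have "0 \<le> norm (v + t *\<^sub>R h) powr (\<alpha> - 2) * ((norm (v + t *\<^sub>R h))\<^sup>2 * (h \<bullet> (A *v h))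
          + \<alpha> * ((v + t *\<^sub>R h) \<bullet> h) * (h \<bullet> (A *v (v + t *\<^sub>R h))))"
        using form_nonneg by simp
      ultimately show "\<exists>y. DERIV \<phi> t :> y \<and> 0 \<le> y" by blast
    qed simp
    moreover have "\<phi> 0 = F_map A \<alpha> v \<bullet> (u - v)" and "\<phi> 1 = F_map A \<alpha> u \<bullet> (u - v)"
      by (simp_all add: \<phi>_def h_def)
    ultimately show ?thesis unfolding inner_diff_left by linarith
  qed
qed

lemma F_map_monotone_if_trace_dominant:
  assumes "0 < \<alpha>" and "trace_dominant (1 / (1 + \<alpha>)\<^sup>2) A"
  shows "monotone_map (F_map A \<alpha>)"
  by (rule F_map_monotone_if_derivative_form_nonneg[OF assms(1) trace_dominant_derivative_form_nonneg[OF assms]])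

lemma norm_powr_scaleR_strongly_monotone:
  fixes u v :: "'a::real_inner" and \<alpha> :: real
  assumes "0 < \<alpha>"
  shows "norm (u - v) powr (\<alpha> + 2) / 2 powr (\<alpha> + 1)
           \<le> (norm u powr \<alpha> *\<^sub>R u - norm v powr \<alpha> *\<^sub>R v) \<bullet> (u - v)"
proof -
  define P Q d where "P = norm u powr \<alpha>" and "Q = norm v powr \<alpha>" and "d = norm (u - v)"
  have PQ: "0 \<le> P" "0 \<le> Q" by (simp_all add: P_def Q_def)
  have expand: "(P *\<^sub>R u - Q *\<^sub>R v) \<bullet> (u - v)
      = (P + Q) / 2 * d\<^sup>2 + (P - Q) * ((norm u)\<^sup>2 - (norm v)\<^sup>2) / 2"
    by (simp add: d_def power2_norm_eq_inner inner_diff_left inner_diff_right inner_commute field_simps)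
  have "0 \<le> (P - Q) * ((norm u)\<^sup>2 - (norm v)\<^sup>2)"
  proof (cases "norm u \<le> norm v")
    case True
    then have "P \<le> Q" and "(norm u)\<^sup>2 \<le> (norm v)\<^sup>2"
      using assms by (simp_all add: P_def Q_def powr_mono2 power_mono)
    then show ?thesis by (simp add: mult_nonpos_nonpos)
  next
    case False
    then have "Q \<le> P" and "(norm v)\<^sup>2 \<le> (norm u)\<^sup>2"
      using assms by (simp_all add: P_def Q_def powr_mono2 power_mono)
    then show ?thesis by simp
  qed
  hence cross: "(P + Q) / 2 * d\<^sup>2 \<le> (P *\<^sub>R u - Q *\<^sub>R v) \<bullet> (u - v)" unfolding expand by simp
  define m where "m = max (norm u) (norm v)"
  have "d \<le> 2 * m"
    using norm_triangle_ineq4[of u v] by (simp add: d_def m_def)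
  hence "d powr \<alpha> \<le> (2 * m) powr \<alpha>"
    using assms by (intro powr_mono2) (simp_all add: d_def)
  also have "\<dots> = 2 powr \<alpha> * m powr \<alpha>" by (simp add: powr_mult m_def)
  also have "m powr \<alpha> \<le> P + Q" using PQ by (simp add: m_def max_def P_def Q_def)
  hence "2 powr \<alpha> * m powr \<alpha> \<le> 2 powr \<alpha> * (P + Q)" by simp
  finally have dpow: "d powr \<alpha> \<le> 2 powr \<alpha> * (P + Q)" .
  have "d powr (\<alpha> + 2) / 2 powr (\<alpha> + 1) = d powr \<alpha> * d\<^sup>2 / (2 * 2 powr \<alpha>)"
    by (simp add: powr_add d_def powr_realpow' mult.commute)
  also have "\<dots> \<le> 2 powr \<alpha> * (P + Q) * d\<^sup>2 / (2 * 2 powr \<alpha>)"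
    using dpow by (intro divide_right_mono mult_right_mono) simp_all
  also have "\<dots> = (P + Q) / 2 * d\<^sup>2" by simp
  also have "\<dots> \<le> (P *\<^sub>R u - Q *\<^sub>R v) \<bullet> (u - v)" by (rule cross)
  finally show ?thesis by (simp only: P_def Q_def d_def)
qed

lemma trace_dominant_diff_scaleR_mat1:
  fixes A :: "real^'n^'n"
  assumes "0 < mat_trace A" and "(real CARD('n) - c) * (norm A)\<^sup>2 < (mat_trace A)\<^sup>2"
  shows "\<exists>e>0. trace_dominant c (A - e *\<^sub>R mat 1)"
proof -
  define n where "n = real CARD('n)"
  have tr: "((\<lambda>e. mat_trace (A - e *\<^sub>R mat 1)) \<longlongrightarrow> mat_trace A) (at_right 0)"
    unfolding mat_trace_diff_scaleR_mat1 by (auto intro!: tendsto_eq_intros)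
  have nrm: "((\<lambda>e. norm (A - e *\<^sub>R mat 1)) \<longlongrightarrow> norm A) (at_right 0)"
    by (auto intro!: tendsto_eq_intros)
  have "((\<lambda>e. (mat_trace (A - e *\<^sub>R mat 1))\<^sup>2 - (n - c) * (norm (A - e *\<^sub>R mat 1))\<^sup>2)
      \<longlongrightarrow> (mat_trace A)\<^sup>2 - (n - c) * (norm A)\<^sup>2) (at_right 0)"
    by (intro tendsto_intros tr nrm)
  hence "\<forall>\<^sub>F e in at_right 0. 0 < (mat_trace (A - e *\<^sub>R mat 1))\<^sup>2 - (n - c) * (norm (A - e *\<^sub>R mat 1))\<^sup>2"
    by (rule order_tendstoD(1)) (use assms(2) in \<open>simp add: n_def\<close>)
  moreover have "\<forall>\<^sub>F e in at_right 0. 0 < mat_trace (A - e *\<^sub>R mat 1)"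
    using order_tendstoD(1)[OF tr assms(1)] .
  moreover have "\<forall>\<^sub>F e in at_right (0::real). 0 < e" by (rule eventually_at_right_less)
  ultimately have "\<forall>\<^sub>F e in at_right 0. 0 < e \<and> trace_dominant c (A - e *\<^sub>R mat 1)"
    by eventually_elim (simp add: trace_dominant_def n_def)
  then show ?thesis
    using eventually_happens'[OF trivial_limit_at_right_real] by blast
qed

lemma F_map_diff_scaleR_mat1:
  "F_map A \<alpha> u = F_map (A - e *\<^sub>R mat 1) \<alpha> u + e *\<^sub>R (norm u powr \<alpha> *\<^sub>R u)"
  by (simp add: F_map_def matrix_vector_mult_diff_rdistrib scaleR_matrix_vector_assoc[symmetric] algebra_simps)

lemma F_map_beta_monotone_if_strictly_trace_dominant:
  fixes A :: "real^'n^'n"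
  assumes "0 < \<alpha>" and "0 < mat_trace A"
    and "(real CARD('n) - 1 / (1 + \<alpha>)\<^sup>2) * (norm A)\<^sup>2 < (mat_trace A)\<^sup>2"
  shows "beta_monotone (\<alpha> + 2) (F_map A \<alpha>)"
proof -
  obtain e where e: "0 < e" and dom: "trace_dominant (1 / (1 + \<alpha>)\<^sup>2) (A - e *\<^sub>R mat 1)"
    using trace_dominant_diff_scaleR_mat1[OF assms(2,3)] by blast
  have mono: "monotone_map (F_map (A - e *\<^sub>R mat 1) \<alpha>)"
    by (rule F_map_monotone_if_trace_dominant[OF assms(1) dom])
  show ?thesis
    unfolding beta_monotone_def
  proof (intro exI[of _ "e / 2 powr (\<alpha> + 1)"] conjI allI)
    show "0 < e / 2 powr (\<alpha> + 1)" using e by simp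
    fix u v :: "real^'n"
    have "e / 2 powr (\<alpha> + 1) * norm (u - v) powr (\<alpha> + 2)
        \<le> e * ((norm u powr \<alpha> *\<^sub>R u - norm v powr \<alpha> *\<^sub>R v) \<bullet> (u - v))"
      using mult_left_mono[OF norm_powr_scaleR_strongly_monotone[OF assms(1), of u v], of e] e
      by simp
    also have "\<dots> \<le> (F_map (A - e *\<^sub>R mat 1) \<alpha> u - F_map (A - e *\<^sub>R mat 1) \<alpha> v) \<bullet> (u - v)
        + e * ((norm u powr \<alpha> *\<^sub>R u - norm v powr \<alpha> *\<^sub>R v) \<bullet> (u - v))"
      using mono by (simp add: monotone_map_def)
    also have "\<dots> = (F_map A \<alpha> u - F_map A \<alpha> v) \<bullet> (u - v)"
      by (subst (1 2) F_map_diff_scaleR_mat1[of A \<alpha> _ e]) (simp add: inner_diff_left inner_add_left algebra_simps)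
    finally show "e / 2 powr (\<alpha> + 1) * norm (u - v) powr (\<alpha> + 2) \<le> (F_map A \<alpha> u - F_map A \<alpha> v) \<bullet> (u - v)" .
  qed
qed

lemma sqrt_le_divide_imp:
  fixes s T N :: real
  assumes "0 < s" and "0 \<le> N" and "sqrt s \<le> T / N"
  shows "0 < T" and "s * N\<^sup>2 \<le> T\<^sup>2"
proof -
  have "N \<noteq> 0" using assms by auto
  hence le: "sqrt s * N \<le> T" using assms by (simp add: le_divide_eq)
  moreover have "0 < sqrt s * N" using assms \<open>N \<noteq> 0\<close> by simp
  ultimately show "0 < T" by linarith
  from le have "(sqrt s * N)\<^sup>2 \<le> T\<^sup>2" using assms by (intro power_mono) simp_all
  thus "s * N\<^sup>2 \<le> T\<^sup>2" using assms by (simp add: power_mult_distrib)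
qed

lemma sqrt_less_divide_imp:
  fixes s T N :: real
  assumes "0 < s" and "0 \<le> N" and "sqrt s < T / N"
  shows "s * N\<^sup>2 < T\<^sup>2"
proof -
  have "N \<noteq> 0" using assms by auto
  hence "sqrt s * N < T" using assms by (simp add: less_divide_eq)
  hence "(sqrt s * N)\<^sup>2 < T\<^sup>2" using assms by (intro power_strict_mono) simp_all
  thus ?thesis using assms by (simp add: power_mult_distrib)
qed

theorem mainTheorem12:
  fixes A :: "real^'n^'n" and \<alpha> :: real
  assumes "\<alpha> > 0"
  shows "(mat_trace A / frob_norm A \<ge> sqrt (real CARD('n) - 1 / (1 + \<alpha>)^2)
            \<longrightarrow> monotone_map (F_map A \<alpha>))
       \<and> (mat_trace A / frob_norm A > sqrt (real CARD('n) - 1 / (1 + \<alpha>)^2)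
            \<longrightarrow> beta_monotone (\<alpha> + 2) (F_map A \<alpha>))"
proof (intro conjI impI)
  have "1 / (1 + \<alpha>)\<^sup>2 < real CARD('n)" by (rule inverse_square_bounds(2)[OF assms])
  hence pos: "0 < real CARD('n) - 1 / (1 + \<alpha>)\<^sup>2" by simp
  show "monotone_map (F_map A \<alpha>)"
    if "mat_trace A / frob_norm A \<ge> sqrt (real CARD('n) - 1 / (1 + \<alpha>)^2)"
    using sqrt_le_divide_imp[OF pos norm_ge_zero that[unfolded frob_norm_eq_norm]]
    by (intro F_map_monotone_if_trace_dominant[OF assms]) (simp add: trace_dominant_def)
  show "beta_monotone (\<alpha> + 2) (F_map A \<alpha>)"
    if "mat_trace A / frob_norm A > sqrt (real CARD('n) - 1 / (1 + \<alpha>)^2)"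
    using sqrt_le_divide_imp(1)[OF pos norm_ge_zero less_imp_le[OF that[unfolded frob_norm_eq_norm]]]
      sqrt_less_divide_imp[OF pos norm_ge_zero that[unfolded frob_norm_eq_norm]]
    by (rule F_map_beta_monotone_if_strictly_trace_dominant[OF assms])
qed

end
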